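(* Let $q\in\mathbb{C}^*$, $\lambda\in\mathbb{C}^*$, $a,b\in\mathbb{C}$, and let $\lambda^{\frac12}$ denote a square root of $\lambda$. Then $\Omega_{\mathcal{L}}(\lambda,a,b)\cong\Omega_{\mathcal{R}}(\lambda^{\frac12},a,2b)$ as $\mathcal{L}$-modules, where $\Omega_{\mathcal{R}}(\lambda^{\frac12},a,2b)$ is regarded as an $\mathcal{L}$-module via $\tau$.
   Context: Let $\mathbb{Z}_+=\{0,1,2,\dots\}$. For $s\in\{0,\frac12\}$ let $S(q)$ be the Lie superalgebra over $\mathbb{C}$ with even basis $\{L_{m,i}\mid m\in\mathbb{Z},i\in\mathbb{Z}_+\}$, odd basis $\{G_{l,j}\mid l\in s+\mathbb{Z},j\in\mathbb{Z}_+\}$ and brackets $[L_{m,i},L_{n,j}]=(n(i+q)-m(j+q))L_{m+n,i+j}$, $[L_{m,i},G_{l,j}]=(l(i+q)-m(j+\frac{q}{2}))G_{m+l,i+j}$, $[G_{l,i},G_{r,j}]=2qL_{l+r,i+j}$. For $s=0$ this is $\mathcal{R}$ (Ramond-Block), for $s=\frac12$ it is $\mathcal{L}$ (Neveu-Schwarz-Block), with the same $q$. $\tau:\mathcal{L}\to\mathcal{R}$ is the injective Lie superalgebra homomorphism with $\tau(L_{m,i})=\frac12L_{2m,i}$, $\tau(G_{r,j})=\frac{1}{\sqrt2}G_{2r,j}$. Modules are supermodules; $\delta$ is the Kronecker delta. For $\nu\in\mathbb{C}^*$, $a,c\in\mathbb{C}$, $\Omega_{\mathcal{R}}(\nu,a,c)=\mathbb{C}[t^2]\oplus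 t\mathbb{C}[t^2]$ (even part $\mathbb{C}[t^2]$, odd part $t\mathbb{C}[t^2]$) is the $\mathcal{R}$-module with, for $f\in\mathbb{C}[t^2]$, $m\in\mathbb{Z}$, $i\in\mathbb{Z}_+$: $L_{m,i}f(t^2)=\nu^m(\delta_{i,0}(t^2-mqa)+\delta_{q,-1}\delta_{i,1}c)f(t^2-mq)$; $L_{m,i}tf(t^2)=\nu^m t(\delta_{i,0}(t^2-mqa-\frac{mq}{2})+\delta_{q,-1}\delta_{i,1}c)f(t^2-mq)$; $G_{m,i}f(t^2)=\nu^m\delta_{i,0}tf(t^2-mq)$; $G_{m,i}tf(t^2)=q\nu^m(\delta_{i,0}(t^2-2mqa)+2\delta_{q,-1}\delta_{i,1}c)f(t^2-mq)$. For $\lambda\in\mathbb{C}^*$, $a,b\in\mathbb{C}$, $\Omega_{\mathcal{L}}(\lambda,a,b)=\mathbb{C}[t]\oplus\mathbb{C}[x]$ (even part $\mathbb{C}[t]$, odd part $\mathbb{C}[x]$) is the $\mathcal{L}$-module with, for $f\in\mathbb{C}[t]$, $g\in\mathbb{C}[x]$, $m\in\mathbb{Z}$, $r\in\frac12+\mathbb{Z}$, $i\in\mathbb{Z}_+$: $L_{m,i}f(t)=\lambda^m(\delta_{i,0}(t-mqa)+\delta_{q,-1}\delta_{i,1}b)f(t-mq)$; $L_{m,i}g(x)=\lambda^m(\delta_{i,0}(x-mqa-\frac{mq}{2})+\delta_{q,-1}\delta_{i,1}b)g(x-mq)$; $G_{r,i}f(t)=\lambda^{r-\frac12}\delta_{i,0}f(x-rq)$;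 $G_{r,i}g(x)=q\lambda^{r+\frac12}(\delta_{i,0}(t-2rqa)+2\delta_{q,-1}\delta_{i,1}b)g(t-rq)$. *)

theory Defs
  imports Complex_Main "HOL-Computational_Algebra.Polynomial"
begin

definition shift :: "complex poly \<Rightarrow> complex \<Rightarrow> complex poly" where
  "shift p s = pcompose p [:- s, 1:]"

(* Elements of a module are pairs (even part, odd part) of polynomials.
   Omega_R(nu,a,c): a pair (f,g) encodes f(t^2) + t g(t^2), so both components
   are polynomials in the variable T = t^2.
   Omega_L(lam,a,b): a pair (f,g) encodes f(t) + g(x). *)

definition psmult :: "complex \<Rightarrow> complex poly \<times> complex poly \<Rightarrow> complex poly \<times> complex poly" where
  "psmult c v = (smult c (fst v), smult c (snd v))"

definition OmR_L :: "complex \<Rightarrow> complex \<Rightarrow> complex \<Rightarrow> complex \<Rightarrow> int \<Rightarrow> nat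
     \<Rightarrow> complex poly \<times> complex poly \<Rightarrow> complex poly \<times> complex poly" where
  "OmR_L q nu a c m i v =
     (let mm = of_int m; d0 = of_bool (i = 0); d1 = of_bool (q = -1 \<and> i = 1) in
      (smult (nu powi m) ([: d0 * (- (mm*q*a)) + d1 * c, d0 :] * shift (fst v) (mm*q)),
       smult (nu powi m) ([: d0 * (- (mm*q*a) - mm*q/2) + d1 * c, d0 :] * shift (snd v) (mm*q))))"

(* Action of G_{m,i} on Omega_R(nu,a,c) (m integer since s = 0) *)
definition OmR_G :: "complex \<Rightarrow> complex \<Rightarrow> complex \<Rightarrow> complex \<Rightarrow> int \<Rightarrow> nat
     \<Rightarrow> complex poly \<times> complex poly \<Rightarrow> complex poly \<times> complex poly" where
  "OmR_G q nu a c m i v =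
     (let mm = of_int m; d0 = of_bool (i = 0); d1 = of_bool (q = -1 \<and> i = 1) in
      (smult (q * nu powi m) ([: d0 * (- (2*mm*q*a)) + 2 * d1 * c, d0 :] * shift (snd v) (mm*q)),
       smult (nu powi m * d0) (shift (fst v) (mm*q))))"

definition OmL_L :: "complex \<Rightarrow> complex \<Rightarrow> complex \<Rightarrow> complex \<Rightarrow> int \<Rightarrow> nat
     \<Rightarrow> complex poly \<times> complex poly \<Rightarrow> complex poly \<times> complex poly" where
  "OmL_L q lam a b m i v =
     (let mm = of_int m; d0 = of_bool (i = 0); d1 = of_bool (q = -1 \<and> i = 1) in
      (smult (lam powi m) ([: d0 * (- (mm*q*a)) + d1 * b, d0 :] * shift (fst v) (mm*q)),
       smult (lam powi m) ([: d0 * (- (mm*q*a) - mm*q/2) + d1 * b, d0 :] * shift (snd v) (mm*q))))"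

(* Action of G_{r,i} on Omega_L(lam,a,b), where the half-integer r is written r = k + 1/2,
   k :: int; so lam^(r-1/2) = lam^k and lam^(r+1/2) = lam^(k+1). *)
definition OmL_G :: "complex \<Rightarrow> complex \<Rightarrow> complex \<Rightarrow> complex \<Rightarrow> int \<Rightarrow> nat
     \<Rightarrow> complex poly \<times> complex poly \<Rightarrow> complex poly \<times> complex poly" where
  "OmL_G q lam a b k i v =
     (let r = of_int k + 1/2; d0 = of_bool (i = 0); d1 = of_bool (q = -1 \<and> i = 1) in
      (smult (q * lam powi (k + 1)) ([: d0 * (- (2*r*q*a)) + 2 * d1 * b, d0 :] * shift (snd v) (r*q)),
       smult (lam powi k * d0) (shift (fst v) (r*q))))"

definition tauR_L :: "complex \<Rightarrow> complex \<Rightarrow> complex \<Rightarrow> complex \<Rightarrow> int \<Rightarrow> nat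
     \<Rightarrow> complex poly \<times> complex poly \<Rightarrow> complex poly \<times> complex poly" where
  "tauR_L q nu a c m i v = psmult (1/2) (OmR_L q nu a c (2*m) i v)"

definition tauR_G :: "complex \<Rightarrow> complex \<Rightarrow> complex \<Rightarrow> complex \<Rightarrow> int \<Rightarrow> nat
     \<Rightarrow> complex poly \<times> complex poly \<Rightarrow> complex poly \<times> complex poly" where
  "tauR_G q nu a c k i v = psmult (1 / complex_of_real (sqrt 2)) (OmR_G q nu a c (2*k+1) i v)"

definition lin_bij :: "(complex poly \<Rightarrow> complex poly) \<Rightarrow> bool" where
  "lin_bij h \<longleftrightarrow> (\<forall>f g. h (f + g) = h f + h g) \<and> (\<forall>c f. h (smult c f) = smult c (h f)) \<and> bij h"

definition L_module_iso :: "complex \<Rightarrow> complex \<Rightarrow> complex \<Rightarrow> complex \<Rightarrow> complex \<Rightarrow> complex \<Rightarrow>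
     (complex poly \<Rightarrow> complex poly) \<Rightarrow> (complex poly \<Rightarrow> complex poly) \<Rightarrow> bool" where
  "L_module_iso q lam a b nu c h0 h1 \<longleftrightarrow>
     lin_bij h0 \<and> lin_bij h1 \<and>
     (\<forall>m i v. map_prod h0 h1 (OmL_L q lam a b m i v) = tauR_L q nu a c m i (map_prod h0 h1 v)) \<and>
     (\<forall>k i v. map_prod h0 h1 (OmL_G q lam a b k i v) = tauR_G q nu a c k i (map_prod h0 h1 v))"

end

theory Submission
  imports Defs
begin

text \<open>The isomorphism substitutes \<open>T/2\<close> for both \<open>t\<close> and \<open>x\<close>, where \<open>T = t\<^sup>2\<close> is the variable
  of both components of \<open>\<Omega>\<^sub>R(\<mu>,a,2b)\<close>: \<open>f(t) \<mapsto> \<surd>2 f(T/2)\<close> on the even part and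
  \<open>g(x) \<mapsto> \<mu> g(T/2)\<close> on the odd part. Since \<open>\<tau>\<close> doubles every index, the shift by \<open>mq\<close> (or \<open>rq\<close>)
  in \<open>\<Omega>\<^sub>L\<close> becomes the shift by \<open>2mq\<close> (or \<open>2rq\<close>) in \<open>T\<close>, and \<open>\<mu>\<^sup>2 = \<lambda>\<close> gives \<open>\<mu>\<^bsup>2m\<^esup> = \<lambda>\<^sup>m\<close>.
  The scalars \<open>\<surd>2\<close> and \<open>\<mu>\<close> are forced by the odd generators, where \<open>\<tau>\<close> contributes \<open>1/\<surd>2\<close>
  and the action on odd vectors carries an extra factor \<open>\<lambda>\<close>.\<close>

definition dilate :: "complex \<Rightarrow> complex poly \<Rightarrow> complex poly" where
  "dilate d f = pcompose f [:0, d:]"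

lemma poly_dilate [simp]: "poly (dilate d f) x = poly f (d * x)"
  by (simp add: dilate_def poly_pcompose mult.commute)

lemma poly_shift [simp]: "poly (shift f s) x = poly f (x - s)"
  by (simp add: shift_def poly_pcompose)

lemma lin_bij_smult_dilate:
  assumes "c \<noteq> 0" and "d \<noteq> 0"
  shows "lin_bij (\<lambda>f. smult c (dilate d f))"
proof -
  let ?h = "\<lambda>f. smult c (dilate d f)"
  let ?h' = "\<lambda>f. smult (1/c) (dilate (1/d) f)"
  have "?h' (?h f) = f" and "?h (?h' f) = f" for f
    using assms by (simp_all flip: poly_eq_poly_eq_iff add: fun_eq_iff)
  then have "bij ?h"
    by (intro o_bij[of ?h']) (simp_all add: fun_eq_iff)
  then show ?thesis
    by (simp add: lin_bij_def dilate_def pcompose_add pcompose_smult smult_add_right mult.commute)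
qed

definition iso_even :: "complex poly \<Rightarrow> complex poly" where
  "iso_even f = smult (complex_of_real (sqrt 2)) (dilate (1/2) f)"

definition iso_odd :: "complex \<Rightarrow> complex poly \<Rightarrow> complex poly" where
  "iso_odd mu g = smult mu (dilate (1/2) g)"

lemma dilate_half_L_component:
  assumes "mu\<^sup>2 = lam" and "u' = 2 * u"
  shows "smult c (dilate (1/2) (smult (lam powi m) ([:u, d:] * shift f (of_int m * q))))
       = smult (1/2) (smult (mu powi (2 * m)) ([:u', d:] * shift (smult c (dilate (1/2) f)) (of_int (2 * m) * q)))"
proof -
  have "mu powi (2 * m) = lam powi m"
    using assms(1) by (simp add: power_int_mult)
  then show ?thesis
    using assms(2) by (simp flip: poly_eq_poly_eq_iff add: fun_eq_iff algebra_simps)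
qed

lemma power_int_square_root:
  fixes mu :: complex
  assumes "mu\<^sup>2 = lam" and "mu \<noteq> 0"
  shows "mu powi (2 * k + 1) = mu * lam powi k" and "lam powi (k + 1) = mu * mu * lam powi k"
proof -
  have "lam \<noteq> 0"
    using assms(2) by (simp flip: assms(1))
  then show "mu powi (2 * k + 1) = mu * lam powi k" and "lam powi (k + 1) = mu * mu * lam powi k"
    using assms by (simp_all add: power_int_add power_int_mult power2_eq_square)
qed

text \<open>The trailing factor \<open>z\<close> lets this match the right-nested products produced by \<open>field_simps\<close>.\<close>

lemma sqrt2_times_sqrt2: "complex_of_real (sqrt 2) * (complex_of_real (sqrt 2) * z) = 2 * z"
  by (simp flip: mult.assoc of_real_mult)

lemma iso_even_G_component:
  assumes "mu\<^sup>2 = lam" and "mu \<noteq> 0" and "u' = 2 * u"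
  shows "iso_even (smult (q * lam powi (k + 1)) ([:u, d:] * shift g ((of_int k + 1/2) * q)))
       = smult (1 / complex_of_real (sqrt 2))
           (smult (q * mu powi (2 * k + 1)) ([:u', d:] * shift (iso_odd mu g) (of_int (2 * k + 1) * q)))"
  unfolding power_int_square_root[OF assms(1,2)] using assms(3)
  by (simp flip: poly_eq_poly_eq_iff add: fun_eq_iff iso_even_def iso_odd_def field_simps sqrt2_times_sqrt2)

lemma iso_odd_G_component:
  assumes "mu\<^sup>2 = lam" and "mu \<noteq> 0"
  shows "iso_odd mu (smult (lam powi k * d) (shift f ((of_int k + 1/2) * q)))
       = smult (1 / complex_of_real (sqrt 2))
           (smult (mu powi (2 * k + 1) * d) (shift (iso_even f) (of_int (2 * k + 1) * q)))"
  unfolding power_int_square_root[OF assms]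
  by (simp flip: poly_eq_poly_eq_iff add: fun_eq_iff iso_even_def iso_odd_def field_simps sqrt2_times_sqrt2)

lemma iso_intertwines_L:
  assumes "mu\<^sup>2 = lam"
  shows "map_prod iso_even (iso_odd mu) (OmL_L q lam a b m i v)
       = tauR_L q mu a (2 * b) m i (map_prod iso_even (iso_odd mu) v)"
  unfolding OmL_L_def tauR_L_def OmR_L_def psmult_def iso_even_def iso_odd_def Let_def
  by (cases v) (simp only: map_prod_simp prod.sel prod.inject;
      intro conjI dilate_half_L_component[OF assms]; simp add: algebra_simps)

lemma iso_intertwines_G:
  assumes "mu\<^sup>2 = lam" and "mu \<noteq> 0"
  shows "map_prod iso_even (iso_odd mu) (OmL_G q lam a b k i v)
       = tauR_G q mu a (2 * b) k i (map_prod iso_even (iso_odd mu) v)"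
  unfolding OmL_G_def tauR_G_def OmR_G_def psmult_def Let_def
  by (cases v) (simp only: map_prod_simp prod.sel prod.inject;
      intro conjI iso_even_G_component[OF assms] iso_odd_G_component[OF assms]; simp add: algebra_simps)

theorem proposition4p3:
  fixes q lam a b mu :: complex
  assumes "q \<noteq> 0" and "lam \<noteq> 0" and "mu ^ 2 = lam"
  shows "\<exists>h0 h1. L_module_iso q lam a b mu (2 * b) h0 h1"
proof -
  have "mu \<noteq> 0"
    using assms(2,3) by auto
  then have "lin_bij iso_even" and "lin_bij (iso_odd mu)"
    unfolding iso_even_def iso_odd_def by (simp_all add: lin_bij_smult_dilate)
  then have "L_module_iso q lam a b mu (2 * b) iso_even (iso_odd mu)"
    using iso_intertwines_L[OF assms(3)] iso_intertwines_G[OF assms(3) \<open>mu \<noteq> 0\<close>]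
    by (simp add: L_module_iso_def)
  then show ?thesis
    by blast
qed

end
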